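(* Let $d\ge 1$, $0<c\le\infty$, $X=(0,c)$, $X_{\mathrm{SYM}}=(-c,0)\cup(0,c)$ and $\mathbb{X}=X_{\mathrm{SYM}}\times\cdots\times X_{\mathrm{SYM}}$ ($d$ factors). For $i=1,\dots,d$ let $w_i\in C^2(X)$ be strictly positive, let $p_i\in C^2(X)$ be real-valued with $p_i(x)\neq 0$ for all $x\in X$, and let $q_i\in C^1(X)$ be real-valued; extend them to $X_{\mathrm{SYM}}$ by $w_i(-x)=w_i(x)$, $p_i(-x)=p_i(x)$, $q_i(-x)=-q_i(x)$ for $x\in X$. Let $\mu$ be the measure on $\mathbb{X}$ given by $\mu(dx)=w_1(x_1)\cdots w_d(x_d)\,dx$. For $j=1,\dots,d$ and $f\in C^1(\mathbb{X})$ define $$D_jf(x)=p_j(x_j)\frac{\partial f}{\partial x_j}(x)+q_j(x_j)\frac{f(x)+f(\sigma_jx)}{2}+\Big[p_j(x_j)\frac{w_j'(x_j)}{w_j(x_j)}+p_j'(x_j)-q_j(x_j)\Big]\frac{f(x)-f(\sigma_jx)}{2},$$ where $\sigma_j(x_1,\dots,x_j,\dots,x_d)=(x_1,\dots,-x_j,\dots,x_d)$. Then each $D_j$ is skew-symmetric in $L^2(\mathbb{X},\mu)$, in the sense that $$\langle D_jf,g\rangle_{\mu}=-\langle f,D_jg\rangle_{\mu}\qquad\text{for all } f,g\in C^1_c(\mathbb{X}).$$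
   Context: $\langle\cdot,\cdot\rangle_\mu$ denotes the inner product of $L^2(\mathbb{X},\mu)$, $\langle f,g\rangle_\mu=\int_{\mathbb{X}} f\,\overline{g}\,d\mu$. $C^1_c(\mathbb{X})$ denotes $C^1$ functions with compact support in $\mathbb{X}$ (in particular vanishing near the hyperplanes $x_j=0$). *)

theory Defs
  imports "HOL-Analysis.Analysis"
begin

definition Xhalf :: "ereal \<Rightarrow> real set" where
  "Xhalf c = {x. 0 < x \<and> ereal x < c}"

definition Xsym :: "ereal \<Rightarrow> real set" where
  "Xsym c = {x. x \<noteq> 0 \<and> ereal \<bar>x\<bar> < c}"

definition Xprod :: "ereal \<Rightarrow> (real ^ 'n) set" where
  "Xprod c = {x. \<forall>j. x $ j \<in> Xsym c}"

definition C1_on :: "real set \<Rightarrow> (real \<Rightarrow> real) \<Rightarrow> bool" where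
  "C1_on S f \<longleftrightarrow> (\<forall>x\<in>S. f differentiable (at x)) \<and> continuous_on S (deriv f)"

definition C2_on :: "real set \<Rightarrow> (real \<Rightarrow> real) \<Rightarrow> bool" where
  "C2_on S f \<longleftrightarrow> C1_on S f \<and> C1_on S (deriv f)"

definition C1_multi :: "(real ^ 'n) set \<Rightarrow> (real ^ 'n \<Rightarrow> complex) \<Rightarrow> bool" where
  "C1_multi S f \<longleftrightarrow> (\<exists>f'. (\<forall>x\<in>S. (f has_derivative blinfun_apply (f' x)) (at x))
                          \<and> continuous_on S f')"

definition C1c :: "(real ^ 'n) set \<Rightarrow> (real ^ 'n \<Rightarrow> complex) \<Rightarrow> bool" where
  "C1c S f \<longleftrightarrow> C1_multi S f \<and> compact (closure {x. f x \<noteq> 0})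
                 \<and> closure {x. f x \<noteq> 0} \<subseteq> S"

definition partial :: "'n \<Rightarrow> (real ^ 'n \<Rightarrow> complex) \<Rightarrow> real ^ 'n \<Rightarrow> complex" where
  "partial j f x = frechet_derivative f (at x) (axis j 1)"

definition sigma :: "'n \<Rightarrow> real ^ 'n \<Rightarrow> real ^ 'n" where
  "sigma j x = (\<chi> i. if i = j then - (x $ i) else x $ i)"

definition Dop :: "('n \<Rightarrow> real \<Rightarrow> real) \<Rightarrow> ('n \<Rightarrow> real \<Rightarrow> real) \<Rightarrow> ('n \<Rightarrow> real \<Rightarrow> real)
                  \<Rightarrow> 'n \<Rightarrow> (real ^ 'n \<Rightarrow> complex) \<Rightarrow> real ^ 'n \<Rightarrow> complex" where
  "Dop w p q j f x =
     complex_of_real (p j (x $ j)) * partial j f x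
   + complex_of_real (q j (x $ j)) * ((f x + f (sigma j x)) / 2)
   + complex_of_real (p j (x $ j) * deriv (w j) (x $ j) / w j (x $ j)
                      + deriv (p j) (x $ j) - q j (x $ j)) * ((f x - f (sigma j x)) / 2)"

definition mu :: "ereal \<Rightarrow> ('n \<Rightarrow> real \<Rightarrow> real) \<Rightarrow> (real ^ 'n) measure" where
  "mu c w = density lborel (\<lambda>x. indicator (Xprod c) x * ennreal (\<Prod>j\<in>UNIV. w j (x $ j)))"

definition inner_mu :: "ereal \<Rightarrow> ('n \<Rightarrow> real \<Rightarrow> real) \<Rightarrow> (real ^ 'n \<Rightarrow> complex)
                       \<Rightarrow> (real ^ 'n \<Rightarrow> complex) \<Rightarrow> complex" where
  "inner_mu c w f g = (LINT x|mu c w. f x * cnj (g x))"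

end

theory Submission
  imports Defs
begin

text \<open>
  Let W be the density of mu and A the bracket in front of (f x - f (sigma_j x)) / 2 in D_j.
  Expanding W (D_j f) conj g + W f conj (D_j g), all terms without a reflection combine into the
  derivative along the j-th axis of p_j W f conj g: the coefficient p_j w_j' / w_j + p_j' of the odd
  part is exactly what the product rule produces. This derivative integrates to zero because f and g
  have compact support inside the open set Xprod c. The remaining terms,
  W (q_j - A) (f (sigma_j x) conj (g x) + f x conj (g (sigma_j x))) / 2, form a function that is odd
  under sigma_j (w_j and p_j are even, q_j is odd), so they integrate to zero as well, sigma_j
  preserving Lebesgue measure.
\<close>

lemma open_Xhalf: "open (Xhalf c)"
proof (cases c)
  case (real r)
  then have "Xhalf c = {0<..<r}" by (auto simp: Xhalf_def)
  then show ?thesis by simp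
next
  case PInf
  then have "Xhalf c = {0<..}" by (auto simp: Xhalf_def)
  then show ?thesis by simp
next
  case MInf
  then have "Xhalf c = {}" by (auto simp: Xhalf_def)
  then show ?thesis by simp
qed

lemma Xsym_iff: "y \<in> Xsym c \<longleftrightarrow> y \<in> Xhalf c \<or> - y \<in> Xhalf c"
  by (auto simp: Xsym_def Xhalf_def abs_if)

lemma Xsym_eq: "Xsym c = Xhalf c \<union> uminus ` Xhalf c"
  by (auto simp: Xsym_iff image_iff) (metis minus_minus)

lemma open_Xsym: "open (Xsym c)"
  unfolding Xsym_eq by (intro open_Un open_Xhalf open_negations)

lemma Xprod_nth: "x \<in> Xprod c \<Longrightarrow> x $ i \<in> Xsym c"
  by (simp add: Xprod_def)

lemma open_Xprod: "open (Xprod c :: (real ^ 'n::finite) set)"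
proof -
  have "Xprod c = (\<Inter>i. (\<lambda>x::real ^ 'n. x $ i) -` Xsym c)"
    by (auto simp: Xprod_def)
  also have "open \<dots>"
    by (intro open_INT ballI open_vimage open_Xsym continuous_intros) simp
  finally show ?thesis .
qed

lemma sigma_nth_same [simp]: "sigma j x $ j = - (x $ j)"
  by (simp add: sigma_def)

lemma sigma_nth_other [simp]: "i \<noteq> j \<Longrightarrow> sigma j x $ i = x $ i"
  by (simp add: sigma_def)

lemma sigma_sigma [simp]: "sigma j (sigma j x) = x"
  by (simp add: sigma_def vec_eq_iff)

lemma sigma_in_Xprod_iff [simp]: "sigma j x \<in> Xprod c \<longleftrightarrow> x \<in> Xprod c"
proof -
  have "sigma j x $ i \<in> Xsym c \<longleftrightarrow> x $ i \<in> Xsym c" for i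
    by (cases "i = j") (simp_all add: Xsym_def)
  then show ?thesis by (simp add: Xprod_def)
qed

lemma continuous_on_sigma: "continuous_on S (sigma j :: real ^ 'n::finite \<Rightarrow> _)"
  unfolding sigma_def
proof (intro continuous_on_vec_lambda)
  show "continuous_on S (\<lambda>x. if i = j then - x $ i else x $ i)" for i
    by (cases "i = j") (simp_all add: continuous_on_minus continuous_on_component)
qed

lemma continuous_on_comp_sigma:
  "continuous_on (Xprod c) h \<Longrightarrow> continuous_on (Xprod c) (\<lambda>x. h (sigma j x))"
  by (rule continuous_on_compose2) (auto intro: continuous_on_sigma)

lemma sigma_eq_linear_map:
  fixes x :: "real ^ 'n::finite"
  shows "sigma j x = (\<Sum>b\<in>Basis. ((if b = axis j 1 then -1 else 1) * (x \<bullet> b)) *\<^sub>R b)"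
    (is "_ = ?T")
proof (rule euclidean_eqI)
  fix b :: "real ^ 'n" assume b: "b \<in> Basis"
  then obtain i where i: "b = axis i 1" by (auto simp: Basis_vec_def)
  have "?T \<bullet> b = (if b = axis j 1 then -1 else 1) * (x \<bullet> b)"
    using b by (simp add: inner_sum_left inner_Basis if_distrib[of "\<lambda>z. _ * z"] cong: if_cong)
  also have "\<dots> = sigma j x \<bullet> b"
    using i by (auto simp: sigma_def inner_axis axis_eq_axis)
  finally show "sigma j x \<bullet> b = ?T \<bullet> b" ..
qed

lemma lborel_distr_sigma: "distr lborel borel (sigma j) = (lborel :: (real ^ 'n::finite) measure)"
proof -
  let ?s = "\<lambda>b::real ^ 'n. if b = axis j 1 then -1 else (1::real)"
  have "(lborel :: (real ^ 'n) measure) =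
      density (distr lborel borel (\<lambda>x. 0 + (\<Sum>b\<in>Basis. (?s b * (x \<bullet> b)) *\<^sub>R b)))
        (\<lambda>_. ennreal (\<Prod>b\<in>Basis. \<bar>?s b\<bar>))"
    by (rule lborel_affine_euclidean) auto
  moreover have "(\<Prod>b\<in>Basis. \<bar>?s b\<bar>) = 1"
    by (intro prod.neutral) simp
  ultimately show ?thesis
    by (simp add: sigma_eq_linear_map[symmetric] density_1 fun_eq_iff)
qed

lemma integral_lborel_invariant:
  fixes h :: "'a::euclidean_space \<Rightarrow> 'b::{banach, second_countable_topology}"
  assumes [measurable]: "T \<in> borel_measurable borel" "h \<in> borel_measurable borel"
    and T: "distr lborel borel T = lborel"
  shows "integrable lborel (\<lambda>x. h (T x)) \<longleftrightarrow> integrable lborel h"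
    and "(\<integral>x. h (T x) \<partial>lborel) = integral\<^sup>L lborel h"
proof -
  show "integrable lborel (\<lambda>x. h (T x)) \<longleftrightarrow> integrable lborel h"
    using integrable_distr_eq[of T lborel borel h] T by simp
  have "integral\<^sup>L (distr lborel borel T) h = (\<integral>x. h (T x) \<partial>lborel)"
    by (rule integral_distr) simp_all
  then show "(\<integral>x. h (T x) \<partial>lborel) = integral\<^sup>L lborel h"
    using T by simp
qed

lemma integral_sigma_odd_eq_0:
  fixes h :: "real ^ 'n::finite \<Rightarrow> 'b::{banach, second_countable_topology}"
  assumes [measurable]: "h \<in> borel_measurable borel"
    and odd: "\<And>x. h (sigma j x) = - h x"
  shows "integral\<^sup>L lborel h = 0"
proof -
  have [measurable]: "sigma j \<in> borel_measurable (borel :: (real ^ 'n) measure)"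
    by (rule borel_measurable_continuous_onI[OF continuous_on_sigma])
  have "integral\<^sup>L lborel h = (\<integral>x. h (sigma j x) \<partial>lborel)"
    by (rule integral_lborel_invariant(2)[OF _ _ lborel_distr_sigma, symmetric]) simp_all
  also have "\<dots> = - integral\<^sup>L lborel h"
    by (simp add: odd)
  finally show ?thesis
    by (metis add.right_inverse scaleR_2 scaleR_eq_0_iff zero_neq_numeral)
qed

context
  fixes h :: "real \<Rightarrow> real" and s :: real and c :: ereal
  assumes h_C1: "C1_on (Xhalf c) h"
    and s_square: "s * s = 1"
    and h_parity: "\<And>x. x \<in> Xhalf c \<Longrightarrow> h (- x) = s * h x"
begin

lemma parity_on_Xsym: "y \<in> Xsym c \<Longrightarrow> h (- y) = s * h y"
  using h_parity[of y] h_parity[of "- y"] s_square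
  by (auto simp: Xsym_iff)

lemma has_real_derivative_on_Xsym:
  assumes "y \<in> Xsym c"
  shows "(h has_real_derivative deriv h y) (at y)"
    and "deriv h (- y) = - s * deriv h y"
proof -
  have dpos: "(h has_real_derivative deriv h x) (at x)" if "x \<in> Xhalf c" for x
    using h_C1 that by (simp add: C1_on_def DERIV_deriv_iff_real_differentiable)
  have dneg: "(h has_real_derivative - s * deriv h (- x)) (at x)" if "- x \<in> Xhalf c" for x
  proof -
    have "((\<lambda>z. h (- z)) has_real_derivative deriv h (- x) * -1) (at x)"
      using DERIV_chain2[where g=uminus, OF dpos[OF that] DERIV_minus[OF DERIV_ident]] by simp
    then have "((\<lambda>z. s * h (- z)) has_real_derivative s * (deriv h (- x) * -1)) (at x)"
      by (rule DERIV_cmult)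
    moreover have "s * h (- z) = h z" if "z \<in> uminus ` Xhalf c" for z
      using that parity_on_Xsym[of "- z"] s_square by (auto simp: Xsym_iff)
    moreover have "x \<in> uminus ` Xhalf c"
      using that by force
    ultimately show ?thesis
      using has_field_derivative_transform_within_open[OF _ open_negations[OF open_Xhalf]] by simp
  qed
  have "(h has_real_derivative deriv h y) (at y) \<and> deriv h (- y) = - s * deriv h y"
  proof (cases "y \<in> Xhalf c")
    case True
    have "deriv h (- y) = - s * deriv h (- (- y))"
      by (rule DERIV_imp_deriv) (rule dneg, simp add: True)
    with True dpos show ?thesis by simp
  next
    case False
    then have my: "- y \<in> Xhalf c" using assms by (simp add: Xsym_iff)
    have d: "deriv h y = - s * deriv h (- y)"
      by (rule DERIV_imp_deriv) (rule dneg[OF my])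
    then have "s * deriv h y = - (s * s) * deriv h (- y)" by simp
    with dneg[OF my] d show ?thesis by (simp add: s_square)
  qed
  then show "(h has_real_derivative deriv h y) (at y)" and "deriv h (- y) = - s * deriv h y"
    by simp_all
qed

lemma continuous_on_deriv_Xsym: "continuous_on (Xsym c) (deriv h)"
proof -
  have pos: "continuous_on (Xhalf c) (deriv h)"
    using h_C1 by (simp add: C1_on_def)
  have "continuous_on (uminus ` Xhalf c) (\<lambda>y. - s * deriv h (- y))"
    by (intro continuous_intros continuous_on_compose2[OF pos]) auto
  moreover have "- s * deriv h (- y) = deriv h y" if "y \<in> uminus ` Xhalf c" for y
    using has_real_derivative_on_Xsym(2)[of "- y"] that by (auto simp: Xsym_iff)
  ultimately have "continuous_on (uminus ` Xhalf c) (deriv h)"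
    by (rule continuous_on_eq)
  with pos show ?thesis
    unfolding Xsym_eq by (intro continuous_on_open_Un open_Xhalf open_negations)
qed

lemma continuous_on_Xsym: "continuous_on (Xsym c) h"
  by (rule continuous_at_imp_continuous_on) (blast intro: DERIV_isCont has_real_derivative_on_Xsym(1))

end

lemma continuous_on_UNIV_if_vanishing_outside:
  fixes \<phi> :: "'a::topological_space \<Rightarrow> 'b::real_normed_vector"
  assumes "continuous_on S \<phi>" "open S" "closed K" "K \<subseteq> S" "\<And>x. x \<notin> K \<Longrightarrow> \<phi> x = 0"
  shows "continuous_on UNIV \<phi>"
proof -
  have "continuous_on (- K) \<phi>"
    by (rule continuous_on_eq[OF continuous_on_const]) (simp add: assms(5))
  then have "continuous_on (S \<union> - K) \<phi>"
    using assms by (intro continuous_on_open_Un) auto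
  moreover have "S \<union> - K = UNIV" using assms by auto
  ultimately show ?thesis by simp
qed

lemma integrable_lborel_if_vanishing_outside_compact:
  fixes \<phi> :: "'a::euclidean_space \<Rightarrow> 'b::{banach, second_countable_topology}"
  assumes "continuous_on UNIV \<phi>" "compact K" "\<And>x. x \<notin> K \<Longrightarrow> \<phi> x = 0"
  shows "integrable lborel \<phi>"
proof -
  have "integrable lborel (\<lambda>x. indicator K x *\<^sub>R \<phi> x)"
    using assms(1,2) by (intro borel_integrable_compact) (auto intro: continuous_on_subset)
  also have "(\<lambda>x. indicator K x *\<^sub>R \<phi> x) = \<phi>"
    using assms(3) by (auto simp: indicator_def fun_eq_iff)
  finally show ?thesis .
qed

lemma C1_multi_continuous_on: "C1_multi S h \<Longrightarrow> continuous_on S h"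
  unfolding C1_multi_def by (metis continuous_at_imp_continuous_on has_derivative_continuous)

lemma partial_eq_derivative_axis:
  assumes "(h has_derivative blinfun_apply h') (at x)"
  shows "partial j h x = blinfun_apply h' (axis j 1)"
  unfolding partial_def using frechet_derivative_at[OF assms] by simp

lemma C1_multi_continuous_on_partial:
  assumes "C1_multi S h"
  shows "continuous_on S (partial j h)"
proof -
  obtain h' where h': "\<And>x. x \<in> S \<Longrightarrow> (h has_derivative blinfun_apply (h' x)) (at x)"
    and "continuous_on S h'"
    using assms by (auto simp: C1_multi_def)
  then have "continuous_on S (\<lambda>x. blinfun_apply (h' x) (axis j 1))"
    by (intro blinfun.continuous_on continuous_on_const)
  then show ?thesis
    by (rule continuous_on_eq) (simp add: partial_eq_derivative_axis[OF h'])
qed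

lemma C1_multi_line_derivative:
  assumes "C1_multi S h" "x + t *\<^sub>R axis j 1 \<in> S"
  shows "((\<lambda>s. h (x + s *\<^sub>R axis j 1)) has_vector_derivative partial j h (x + t *\<^sub>R axis j 1)) (at t)"
proof -
  obtain h' where h': "(h has_derivative blinfun_apply h') (at (x + t *\<^sub>R axis j 1))"
    using assms by (auto simp: C1_multi_def)
  have "((\<lambda>s. x + s *\<^sub>R axis j 1) has_derivative (\<lambda>u. u *\<^sub>R axis j 1)) (at t)"
    by (auto intro!: derivative_eq_intros)
  from has_derivative_compose[OF this h'] show ?thesis
    by (simp add: has_vector_derivative_def partial_eq_derivative_axis[OF h'] blinfun.scaleR_right)
qed

lemma has_vector_derivative_imp_tendsto_quotient:
  fixes \<phi> :: "real \<Rightarrow> 'b::real_normed_vector"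
  assumes "(\<phi> has_vector_derivative D) (at 0)"
  shows "((\<lambda>t. (1 / t) *\<^sub>R (\<phi> t - \<phi> 0)) \<longlongrightarrow> D) (at 0)"
proof -
  have "((\<lambda>t. norm (\<phi> (0 + t) - \<phi> 0 - t *\<^sub>R D) / norm t) \<longlongrightarrow> 0) (at 0)"
    using assms unfolding has_vector_derivative_def has_derivative_at by blast
  then have "((\<lambda>t. norm ((1 / t) *\<^sub>R (\<phi> t - \<phi> 0) - D)) \<longlongrightarrow> 0) (at 0)"
  proof (rule Lim_transform_eventually)
    have "norm (\<phi> (0 + t) - \<phi> 0 - t *\<^sub>R D) / norm t = norm ((1 / t) *\<^sub>R (\<phi> t - \<phi> 0) - D)"
      if "t \<noteq> 0" for t :: real
    proof -
      have "(1 / t) *\<^sub>R (\<phi> t - \<phi> 0) - D = (1 / t) *\<^sub>R (\<phi> t - \<phi> 0 - t *\<^sub>R D)"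
        using that by (simp add: scaleR_diff_right)
      then show ?thesis by (simp add: divide_inverse mult.commute)
    qed
    then show "\<forall>\<^sub>F t in at 0. norm (\<phi> (0 + t) - \<phi> 0 - t *\<^sub>R D) / norm t
        = norm ((1 / t) *\<^sub>R (\<phi> t - \<phi> 0) - D)"
      by (simp add: eventually_at_filter)
  qed
  then show ?thesis
    using Lim_null tendsto_norm_zero_iff by blast
qed

lemma norm_line_increment_le:
  fixes F G :: "'a::real_normed_vector \<Rightarrow> 'b::real_normed_vector"
  assumes D: "\<And>t. ((\<lambda>s. F (x + s *\<^sub>R e)) has_vector_derivative G (x + t *\<^sub>R e)) (at t)"
    and B: "\<And>y. norm (G y) \<le> B"
  shows "norm (F (x + t *\<^sub>R e) - F x) \<le> B * \<bar>t\<bar>"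
proof -
  have "norm ((\<lambda>s. F (x + s *\<^sub>R e)) t - (\<lambda>s. F (x + s *\<^sub>R e)) 0) \<le> B * norm (t - 0)"
  proof (rule differentiable_bound[where S=UNIV and f'="\<lambda>s h. h *\<^sub>R G (x + s *\<^sub>R e)"])
    fix s :: real
    show "((\<lambda>s. F (x + s *\<^sub>R e)) has_derivative (\<lambda>h. h *\<^sub>R G (x + s *\<^sub>R e))) (at s within UNIV)"
      using D[of s] by (simp add: has_vector_derivative_def)
    have "onorm (\<lambda>h::real. h *\<^sub>R G (x + s *\<^sub>R e)) = norm (G (x + s *\<^sub>R e))"
      using onorm_scaleR_left[OF bounded_linear_ident] onorm_id[where 'a=real] by (simp add: id_def)
    with B show "onorm (\<lambda>h::real. h *\<^sub>R G (x + s *\<^sub>R e)) \<le> B" by simp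
  qed auto
  then show ?thesis by simp
qed

text \<open>
  The difference quotients (F (x + t e) - F x) / t have integral zero by translation invariance of
  Lebesgue measure, and converge to G dominatedly as t tends to 0.
\<close>

lemma integral_line_derivative_eq_0:
  fixes F G :: "'a::euclidean_space \<Rightarrow> 'b::{banach, second_countable_topology}"
  assumes F_cont: "continuous_on UNIV F" and G_cont: "continuous_on UNIV G" and K: "compact K"
    and F_supp: "\<And>x. x \<notin> K \<Longrightarrow> F x = 0" and G_supp: "\<And>x. x \<notin> K \<Longrightarrow> G x = 0"
    and D: "\<And>x t. ((\<lambda>s. F (x + s *\<^sub>R e)) has_vector_derivative G (x + t *\<^sub>R e)) (at t)"
  shows "integral\<^sup>L lborel G = 0"
proof -
  have [measurable]: "F \<in> borel_measurable borel" "G \<in> borel_measurable borel"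
    using F_cont G_cont by (simp_all add: borel_measurable_continuous_onI)
  have F_int: "integrable lborel F"
    by (rule integrable_lborel_if_vanishing_outside_compact[OF F_cont K F_supp])
  have translate: "integrable lborel (\<lambda>x. F (x + a))"
    "(\<integral>x. F (x + a) \<partial>lborel) = integral\<^sup>L lborel F" for a
  proof -
    have "(\<lambda>x. x + a) = (+) a"
      by (simp add: fun_eq_iff add.commute)
    then have "distr lborel borel (\<lambda>x. x + a) = lborel"
      by (simp add: lborel_distr_plus)
    then show "integrable lborel (\<lambda>x. F (x + a))" "(\<integral>x. F (x + a) \<partial>lborel) = integral\<^sup>L lborel F"
      using integral_lborel_invariant[of "\<lambda>x. x + a" F] F_int by simp_all
  qed
  obtain B where B: "\<And>y. norm (G y) \<le> B"
  proof -
    obtain M where "\<And>y. y \<in> K \<Longrightarrow> norm (G y) \<le> M"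
      using compact_imp_bounded[OF compact_continuous_image[OF continuous_on_subset[OF G_cont] K]]
      by (auto simp: bounded_iff)
    then show thesis
      using G_supp by (intro that[of "max M 0"]) (metis le_max_iff_disj norm_zero order_refl)
  qed
  obtain r where r: "K \<subseteq> cball 0 r"
    using compact_imp_bounded[OF K] by (auto simp: bounded_iff subset_iff)
  define \<tau> where "\<tau> n = 1 / real (Suc n)" for n
  have \<tau>_range: "\<tau> n \<noteq> 0" "\<bar>\<tau> n\<bar> \<le> 1" for n
    by (auto simp: \<tau>_def)
  have \<tau>_lim: "filterlim \<tau> (at 0) sequentially"
  proof -
    have "\<tau> \<longlonglongrightarrow> 0"
      unfolding \<tau>_def by (rule LIMSEQ_Suc[OF lim_inverse_n'])
    then have "filterlim \<tau> (at_right 0) sequentially"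
      by (intro tendsto_imp_filterlim_at_right) (auto simp: \<tau>_def)
    then show ?thesis by (rule filterlim_mono) (auto simp: at_le)
  qed
  define quot where "quot n x = (1 / \<tau> n) *\<^sub>R (F (x + \<tau> n *\<^sub>R e) - F x)" for n x
  have quot_int: "integral\<^sup>L lborel (quot n) = 0" for n
  proof -
    have "integral\<^sup>L lborel (quot n)
        = (1 / \<tau> n) *\<^sub>R ((\<integral>x. F (x + \<tau> n *\<^sub>R e) \<partial>lborel) - integral\<^sup>L lborel F)"
      unfolding quot_def using translate(1) F_int by (simp add: integral_diff)
    then show ?thesis
      by (simp add: translate(2))
  qed
  have quot_lim: "(\<lambda>n. quot n x) \<longlonglongrightarrow> G x" for x
  proof -
    have "((\<lambda>t. (1 / t) *\<^sub>R (F (x + t *\<^sub>R e) - F x)) \<longlongrightarrow> G x) (at 0)"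
      using has_vector_derivative_imp_tendsto_quotient[of "\<lambda>s. F (x + s *\<^sub>R e)"] D[of x 0] by simp
    from filterlim_compose[OF this \<tau>_lim] show ?thesis
      by (simp add: quot_def o_def)
  qed
  have quot_bound: "norm (quot n x) \<le> B * indicator (cball 0 (r + norm e)) x" for n x
  proof (cases "x \<in> cball 0 (r + norm e)")
    case True
    have "norm (quot n x) = norm (F (x + \<tau> n *\<^sub>R e) - F x) / \<bar>\<tau> n\<bar>"
      by (simp add: quot_def divide_inverse mult.commute)
    also have "\<dots> \<le> B"
      using norm_line_increment_le[OF D B, of x "\<tau> n"] \<tau>_range[of n]
      by (simp add: divide_le_eq)
    finally show ?thesis using True by simp
  next
    case False
    have "norm (\<tau> n *\<^sub>R e) \<le> norm e"
      using \<tau>_range[of n] by (simp add: mult_left_le_one_le)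
    moreover have "norm y \<le> r" if "y \<in> K" for y
      using r that by auto
    ultimately have "x \<notin> K" "x + \<tau> n *\<^sub>R e \<notin> K"
      using False norm_ge_zero[of e] norm_triangle_ineq4[of "x + \<tau> n *\<^sub>R e" "\<tau> n *\<^sub>R e"]
      by (smt (verit) add_diff_cancel mem_cball_0)+
    then show ?thesis using False F_supp by (simp add: quot_def)
  qed
  have "(\<lambda>n. integral\<^sup>L lborel (quot n)) \<longlonglongrightarrow> integral\<^sup>L lborel G"
  proof (rule integral_dominated_convergence[where w="\<lambda>x. B * indicator (cball 0 (r + norm e)) x"])
    show "integrable lborel (\<lambda>x. B * indicator (cball 0 (r + norm e)) x)"
      using emeasure_lborel_cball_finite by (intro integrable_mult_right integrable_real_indicator) auto
    show "quot n \<in> borel_measurable lborel" for n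
      unfolding quot_def by measurable
  qed (use quot_lim quot_bound in auto)
  then show ?thesis
    using quot_int by (simp add: LIMSEQ_const_iff)
qed

lemma has_real_derivative_along_axis:
  fixes x :: "real ^ 'n::finite"
  assumes "(h has_real_derivative D) (at ((x + t *\<^sub>R axis j 1) $ j))"
  shows "((\<lambda>s. h ((x + s *\<^sub>R axis j 1) $ j)) has_real_derivative D) (at t)"
  using DERIV_shift[of h D t "x $ j"] assms by (simp add: add.commute)

lemma continuous_on_Xprod_component:
  assumes "continuous_on (Xsym c) h"
  shows "continuous_on (Xprod c) (\<lambda>x. h (x $ i))"
  by (rule continuous_on_compose2[OF assms]) (auto intro: continuous_on_component Xprod_nth)

locale dunkl_coefficients =
  fixes c :: ereal and w p q :: "'n::finite \<Rightarrow> real \<Rightarrow> real"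
  assumes w_C1: "\<And>i. C1_on (Xhalf c) (w i)"
    and w_pos: "\<And>i x. x \<in> Xhalf c \<Longrightarrow> 0 < w i x"
    and p_C1: "\<And>i. C1_on (Xhalf c) (p i)"
    and q_C1: "\<And>i. C1_on (Xhalf c) (q i)"
    and w_even: "\<And>i x. x \<in> Xhalf c \<Longrightarrow> w i (- x) = w i x"
    and p_even: "\<And>i x. x \<in> Xhalf c \<Longrightarrow> p i (- x) = p i x"
    and q_odd: "\<And>i x. x \<in> Xhalf c \<Longrightarrow> q i (- x) = - q i x"
begin

lemma w_parity: "x \<in> Xhalf c \<Longrightarrow> w i (- x) = 1 * w i x"
  and p_parity: "x \<in> Xhalf c \<Longrightarrow> p i (- x) = 1 * p i x"
  and q_parity: "x \<in> Xhalf c \<Longrightarrow> q i (- x) = - 1 * q i x"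
  by (simp_all add: w_even p_even q_odd)

lemma w_even_Xsym: "y \<in> Xsym c \<Longrightarrow> w i (- y) = w i y"
  and p_even_Xsym: "y \<in> Xsym c \<Longrightarrow> p i (- y) = p i y"
  and q_odd_Xsym: "y \<in> Xsym c \<Longrightarrow> q i (- y) = - q i y"
  using parity_on_Xsym[OF w_C1 _ w_parity] parity_on_Xsym[OF p_C1 _ p_parity]
    parity_on_Xsym[OF q_C1 _ q_parity]
  by simp_all

lemma has_real_derivative_w: "y \<in> Xsym c \<Longrightarrow> (w i has_real_derivative deriv (w i) y) (at y)"
  and has_real_derivative_p: "y \<in> Xsym c \<Longrightarrow> (p i has_real_derivative deriv (p i) y) (at y)"
  and deriv_w_odd: "y \<in> Xsym c \<Longrightarrow> deriv (w i) (- y) = - deriv (w i) y"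
  and deriv_p_odd: "y \<in> Xsym c \<Longrightarrow> deriv (p i) (- y) = - deriv (p i) y"
  using has_real_derivative_on_Xsym[OF w_C1 _ w_parity] has_real_derivative_on_Xsym[OF p_C1 _ p_parity]
  by simp_all

lemma continuous_on_w: "continuous_on (Xsym c) (w i)"
  and continuous_on_p: "continuous_on (Xsym c) (p i)"
  and continuous_on_q: "continuous_on (Xsym c) (q i)"
  and continuous_on_deriv_w: "continuous_on (Xsym c) (deriv (w i))"
  and continuous_on_deriv_p: "continuous_on (Xsym c) (deriv (p i))"
  using continuous_on_Xsym[OF w_C1 _ w_parity] continuous_on_Xsym[OF p_C1 _ p_parity]
    continuous_on_Xsym[OF q_C1 _ q_parity] continuous_on_deriv_Xsym[OF w_C1 _ w_parity]
    continuous_on_deriv_Xsym[OF p_C1 _ p_parity]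
  by simp_all

lemma w_pos_Xsym: "y \<in> Xsym c \<Longrightarrow> 0 < w i y"
  using w_pos[of y i] w_pos[of "- y" i] w_even_Xsym[of y i] by (auto simp: Xsym_iff)

definition weight :: "real ^ 'n \<Rightarrow> real" where
  "weight x = (\<Prod>i\<in>UNIV. w i (x $ i))"

definition odd_coeff :: "'n \<Rightarrow> real ^ 'n \<Rightarrow> real" where
  "odd_coeff j x = p j (x $ j) * deriv (w j) (x $ j) / w j (x $ j) + deriv (p j) (x $ j) - q j (x $ j)"

lemma Dop_eq:
  "Dop w p q j f x = of_real (p j (x $ j)) * partial j f x
     + of_real (q j (x $ j)) * ((f x + f (sigma j x)) / 2)
     + of_real (odd_coeff j x) * ((f x - f (sigma j x)) / 2)"
  by (simp add: Dop_def odd_coeff_def)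

lemma weight_pos: "x \<in> Xprod c \<Longrightarrow> 0 < weight x"
  unfolding weight_def by (intro prod_pos ballI w_pos_Xsym Xprod_nth)

lemma weight_sigma: "x \<in> Xprod c \<Longrightarrow> weight (sigma j x) = weight x"
  unfolding weight_def
  by (intro prod.cong refl) (metis sigma_nth_other sigma_nth_same w_even_Xsym Xprod_nth)

lemma continuous_on_weight: "continuous_on (Xprod c) weight"
  unfolding weight_def by (intro continuous_on_prod continuous_on_Xprod_component continuous_on_w)

lemma odd_coeff_sigma: "x \<in> Xprod c \<Longrightarrow> odd_coeff j (sigma j x) = - odd_coeff j x"
  using w_even_Xsym deriv_w_odd p_even_Xsym deriv_p_odd q_odd_Xsym Xprod_nth[of x c j]
  by (simp add: odd_coeff_def field_simps)

lemma continuous_on_odd_coeff: "continuous_on (Xprod c) (odd_coeff j)"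
  unfolding odd_coeff_def
  by (intro continuous_intros continuous_on_Xprod_component continuous_on_w continuous_on_p
      continuous_on_q continuous_on_deriv_w continuous_on_deriv_p)
    (metis Xprod_nth w_pos_Xsym less_irrefl)

lemma continuous_on_Dop:
  assumes "C1_multi (Xprod c) f"
  shows "continuous_on (Xprod c) (Dop w p q j f)"
proof -
  have f: "continuous_on (Xprod c) f"
    using assms by (rule C1_multi_continuous_on)
  moreover have "continuous_on (Xprod c) (\<lambda>x. f (sigma j x))"
    using f by (rule continuous_on_comp_sigma)
  moreover have "continuous_on (Xprod c) (partial j f)"
    using assms by (rule C1_multi_continuous_on_partial)
  ultimately show ?thesis
    unfolding Dop_eq[abs_def]
    by (intro continuous_intros continuous_on_Xprod_component continuous_on_p continuous_on_q
        continuous_on_odd_coeff) simp_all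
qed

lemma inner_mu_eq_integral:
  assumes "(\<lambda>x. \<phi> x * cnj (\<psi> x)) \<in> borel_measurable borel"
  shows "inner_mu c w \<phi> \<psi> = (\<integral>x. (indicator (Xprod c) x * weight x) *\<^sub>R (\<phi> x * cnj (\<psi> x)) \<partial>lborel)"
proof -
  have density_meas: "(\<lambda>x. indicator (Xprod c) x *\<^sub>R weight x) \<in> borel_measurable borel"
    by (rule borel_measurable_continuous_on_indicator[OF _ continuous_on_weight]) (simp add: open_Xprod)
  have density_nonneg: "0 \<le> indicator (Xprod c) x * weight x" for x
    using weight_pos[of x] by (simp add: indicator_def less_imp_le)
  have "mu c w = density lborel (\<lambda>x. ennreal (indicator (Xprod c) x * weight x))"
    unfolding mu_def weight_def
    by (intro arg_cong[where f="density lborel"]) (simp add: fun_eq_iff indicator_def)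
  then show ?thesis
    unfolding inner_mu_def
    using integral_density[of "\<lambda>x. \<phi> x * cnj (\<psi> x)" lborel "\<lambda>x. indicator (Xprod c) x * weight x"]
      assms density_meas density_nonneg
    by simp
qed

lemma weight_along_axis:
  "weight (x + s *\<^sub>R axis j 1) = w j ((x + s *\<^sub>R axis j 1) $ j) * (\<Prod>i\<in>-{j}. w i (x $ i))"
proof -
  have "weight (x + s *\<^sub>R axis j 1) = w j ((x + s *\<^sub>R axis j 1) $ j) * (\<Prod>i\<in>-{j}. w i ((x + s *\<^sub>R axis j 1) $ i))"
    unfolding weight_def by (subst prod.remove[of UNIV j]) (simp_all add: Compl_eq_Diff_UNIV)
  also have "(\<Prod>i\<in>-{j}. w i ((x + s *\<^sub>R axis j 1) $ i)) = (\<Prod>i\<in>-{j}. w i (x $ i))"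
    by (intro prod.cong) (simp_all add: axis_def)
  finally show ?thesis .
qed

lemma has_real_derivative_weight_along_axis:
  assumes "x + t *\<^sub>R axis j 1 \<in> Xprod c"
  shows "((\<lambda>s. weight (x + s *\<^sub>R axis j 1)) has_real_derivative
           weight (x + t *\<^sub>R axis j 1) * deriv (w j) ((x + t *\<^sub>R axis j 1) $ j)
             / w j ((x + t *\<^sub>R axis j 1) $ j)) (at t)"
proof -
  let ?y = "x + t *\<^sub>R axis j 1"
  have "((\<lambda>s. w j ((x + s *\<^sub>R axis j 1) $ j) * (\<Prod>i\<in>-{j}. w i (x $ i))) has_real_derivative
      deriv (w j) (?y $ j) * (\<Prod>i\<in>-{j}. w i (x $ i))) (at t)"
    by (intro DERIV_cmult_right has_real_derivative_along_axis has_real_derivative_w Xprod_nth assms)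
  moreover have "w j (?y $ j) \<noteq> 0"
    using w_pos_Xsym[of "?y $ j" j] Xprod_nth[of ?y c j] assms by (metis less_irrefl)
  ultimately show ?thesis
    by (simp add: weight_along_axis ac_simps)
qed

end

locale dunkl_pair = dunkl_coefficients c w p q
    for c :: ereal and w p q :: "'n::finite \<Rightarrow> real \<Rightarrow> real" +
  fixes j :: 'n and f g :: "real ^ 'n \<Rightarrow> complex"
  assumes f_C1c: "C1c (Xprod c) f" and g_C1c: "C1c (Xprod c) g"
begin

definition support :: "(real ^ 'n) set" where
  "support = closure {x. f x \<noteq> 0} \<union> closure {x. g x \<noteq> 0}"

lemma compact_support: "compact support"
  and support_subset: "support \<subseteq> Xprod c"
  using f_C1c g_C1c by (auto simp: support_def C1c_def)

lemma f_outside_support: "x \<notin> support \<Longrightarrow> f x = 0"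
  and g_outside_support: "x \<notin> support \<Longrightarrow> g x = 0"
  using closure_subset[of "{x. f x \<noteq> 0}"] closure_subset[of "{x. g x \<noteq> 0}"]
  by (auto simp: support_def)

lemma f_C1: "C1_multi (Xprod c) f" and g_C1: "C1_multi (Xprod c) g"
  using f_C1c g_C1c by (simp_all add: C1c_def)

lemma continuous_on_UNIV_if_supported:
  fixes \<phi> :: "real ^ 'n \<Rightarrow> complex"
  assumes "continuous_on (Xprod c) \<phi>" "\<And>x. x \<notin> support \<Longrightarrow> \<phi> x = 0"
  shows "continuous_on UNIV \<phi>"
  by (rule continuous_on_UNIV_if_vanishing_outside[OF assms(1) open_Xprod
        compact_imp_closed[OF compact_support] support_subset assms(2)])

lemma integrable_if_supported:
  fixes \<phi> :: "real ^ 'n \<Rightarrow> complex"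
  assumes "continuous_on (Xprod c) \<phi>" "\<And>x. x \<notin> support \<Longrightarrow> \<phi> x = 0"
  shows "integrable lborel \<phi>"
  using continuous_on_UNIV_if_supported[OF assms] compact_support assms(2)
  by (rule integrable_lborel_if_vanishing_outside_compact)

definition flux :: "real ^ 'n \<Rightarrow> complex" where
  "flux x = (if x \<in> Xprod c then of_real (p j (x $ j) * weight x) * (f x * cnj (g x)) else 0)"

definition flux_deriv :: "real ^ 'n \<Rightarrow> complex" where
  "flux_deriv x = (if x \<in> Xprod c then
     of_real (weight x * (odd_coeff j x + q j (x $ j))) * (f x * cnj (g x))
     + of_real (p j (x $ j) * weight x) * (partial j f x * cnj (g x) + f x * cnj (partial j g x))
   else 0)"

lemma has_vector_derivative_flux:
  "((\<lambda>s. flux (x + s *\<^sub>R axis j 1)) has_vector_derivative flux_deriv (x + t *\<^sub>R axis j 1)) (at t)"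
proof (cases "x + t *\<^sub>R axis j 1 \<in> Xprod c")
  case True
  let ?y = "x + t *\<^sub>R axis j 1"
  define \<rho> where "\<rho> = (\<lambda>s. p j ((x + s *\<^sub>R axis j 1) $ j) * weight (x + s *\<^sub>R axis j 1))"
  have w_nz: "w j (?y $ j) \<noteq> 0"
    using w_pos_Xsym[OF Xprod_nth[OF True]] by (metis less_irrefl)
  have "((\<lambda>s. p j ((x + s *\<^sub>R axis j 1) $ j)) has_real_derivative deriv (p j) (?y $ j)) (at t)"
    by (intro has_real_derivative_along_axis has_real_derivative_p Xprod_nth True)
  from DERIV_mult[OF this has_real_derivative_weight_along_axis[OF True]]
  have "(\<rho> has_real_derivative deriv (p j) (?y $ j) * weight ?y
      + weight ?y * deriv (w j) (?y $ j) / w j (?y $ j) * p j (?y $ j)) (at t)"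
    unfolding \<rho>_def .
  also have "deriv (p j) (?y $ j) * weight ?y + weight ?y * deriv (w j) (?y $ j) / w j (?y $ j) * p j (?y $ j)
      = weight ?y * (odd_coeff j ?y + q j (?y $ j))"
    using w_nz unfolding odd_coeff_def by (simp add: field_simps)
  finally have \<rho>_deriv: "(\<rho> has_real_derivative weight ?y * (odd_coeff j ?y + q j (?y $ j))) (at t)" .
  have f_deriv: "((\<lambda>s. f (x + s *\<^sub>R axis j 1)) has_vector_derivative partial j f ?y) (at t)"
    by (rule C1_multi_line_derivative[OF f_C1 True])
  have "((\<lambda>s. g (x + s *\<^sub>R axis j 1)) has_vector_derivative partial j g ?y) (at t)"
    by (rule C1_multi_line_derivative[OF g_C1 True])
  then have cnj_g_deriv:
    "((\<lambda>s. cnj (g (x + s *\<^sub>R axis j 1))) has_vector_derivative cnj (partial j g ?y)) (at t)"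
    by (rule bounded_linear.has_vector_derivative[OF bounded_linear_cnj])
  have "((\<lambda>s. of_real (\<rho> s) * (f (x + s *\<^sub>R axis j 1) * cnj (g (x + s *\<^sub>R axis j 1))))
      has_vector_derivative
        of_real (\<rho> t) * (f ?y * cnj (partial j g ?y) + partial j f ?y * cnj (g ?y))
        + of_real (weight ?y * (odd_coeff j ?y + q j (?y $ j))) * (f ?y * cnj (g ?y))) (at t)"
    by (intro has_vector_derivative_mult has_vector_derivative_of_real \<rho>_deriv f_deriv cnj_g_deriv)
  also have "of_real (\<rho> t) * (f ?y * cnj (partial j g ?y) + partial j f ?y * cnj (g ?y))
        + of_real (weight ?y * (odd_coeff j ?y + q j (?y $ j))) * (f ?y * cnj (g ?y))
      = flux_deriv ?y"
    unfolding flux_deriv_def \<rho>_def using True by (simp add: ac_simps)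
  finally have "((\<lambda>s. of_real (\<rho> s) * (f (x + s *\<^sub>R axis j 1) * cnj (g (x + s *\<^sub>R axis j 1))))
      has_vector_derivative flux_deriv ?y) (at t)" .
  moreover have "open ((\<lambda>s. x + s *\<^sub>R axis j 1) -` Xprod c)"
    by (intro open_vimage open_Xprod continuous_intros)
  moreover have "t \<in> (\<lambda>s. x + s *\<^sub>R axis j 1) -` Xprod c"
    using True by simp
  moreover have "of_real (\<rho> s) * (f (x + s *\<^sub>R axis j 1) * cnj (g (x + s *\<^sub>R axis j 1)))
      = flux (x + s *\<^sub>R axis j 1)" if "s \<in> (\<lambda>s. x + s *\<^sub>R axis j 1) -` Xprod c" for s
    using that unfolding flux_def \<rho>_def by simp
  ultimately show ?thesis
    by (rule has_vector_derivative_transform_within_open)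
next
  case False
  then have "x + t *\<^sub>R axis j 1 \<notin> support"
    using support_subset by blast
  moreover have "open ((\<lambda>s. x + s *\<^sub>R axis j 1) -` (- support))"
    using compact_imp_closed[OF compact_support] by (intro open_vimage continuous_intros) auto
  moreover have "0 = flux (x + s *\<^sub>R axis j 1)" if "s \<in> (\<lambda>s. x + s *\<^sub>R axis j 1) -` (- support)" for s
    using f_outside_support that by (simp add: flux_def)
  ultimately have "((\<lambda>s. flux (x + s *\<^sub>R axis j 1)) has_vector_derivative 0) (at t)"
    by (intro has_vector_derivative_transform_within_open[OF has_vector_derivative_const]) auto
  moreover have "flux_deriv (x + t *\<^sub>R axis j 1) = 0"
    using False by (simp add: flux_deriv_def)
  ultimately show ?thesis
    by simp
qed

lemma continuous_on_f: "continuous_on (Xprod c) f"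
  and continuous_on_g: "continuous_on (Xprod c) g"
  and continuous_on_partial_f: "continuous_on (Xprod c) (partial j f)"
  and continuous_on_partial_g: "continuous_on (Xprod c) (partial j g)"
  using f_C1 g_C1 by (simp_all add: C1_multi_continuous_on C1_multi_continuous_on_partial)

lemma continuous_on_flux: "continuous_on (Xprod c) flux"
  by (rule continuous_on_eq[where f="\<lambda>x. of_real (p j (x $ j) * weight x) * (f x * cnj (g x))"])
    (auto simp: flux_def intro!: continuous_intros continuous_on_Xprod_component continuous_on_p
       continuous_on_weight continuous_on_f continuous_on_g)

lemma continuous_on_flux_deriv: "continuous_on (Xprod c) flux_deriv"
  by (rule continuous_on_eq[where f="\<lambda>x. of_real (weight x * (odd_coeff j x + q j (x $ j))) * (f x * cnj (g x))
      + of_real (p j (x $ j) * weight x) * (partial j f x * cnj (g x) + f x * cnj (partial j g x))"])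
    (auto simp: flux_deriv_def intro!: continuous_intros continuous_on_Xprod_component continuous_on_p
       continuous_on_q continuous_on_weight continuous_on_odd_coeff continuous_on_f continuous_on_g
       continuous_on_partial_f continuous_on_partial_g)

lemma flux_outside_support: "x \<notin> support \<Longrightarrow> flux x = 0"
  and flux_deriv_outside_support: "x \<notin> support \<Longrightarrow> flux_deriv x = 0"
  by (simp_all add: flux_def flux_deriv_def f_outside_support g_outside_support)

lemma integral_flux_deriv: "integral\<^sup>L lborel flux_deriv = 0"
  using continuous_on_UNIV_if_supported[OF continuous_on_flux flux_outside_support]
    continuous_on_UNIV_if_supported[OF continuous_on_flux_deriv flux_deriv_outside_support]
    compact_support flux_outside_support flux_deriv_outside_support has_vector_derivative_flux
  by (rule integral_line_derivative_eq_0)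

definition reflection_term :: "real ^ 'n \<Rightarrow> complex" where
  "reflection_term x = (if x \<in> Xprod c then
     of_real (weight x * (q j (x $ j) - odd_coeff j x) / 2)
       * (f (sigma j x) * cnj (g x) + f x * cnj (g (sigma j x)))
   else 0)"

lemma reflection_term_sigma: "reflection_term (sigma j x) = - reflection_term x"
proof (cases "x \<in> Xprod c")
  case True
  then show ?thesis
    using q_odd_Xsym[OF Xprod_nth[OF True]]
    by (simp add: reflection_term_def weight_sigma odd_coeff_sigma field_simps)
qed (simp add: reflection_term_def)

lemma continuous_on_reflection_term: "continuous_on (Xprod c) reflection_term"
  by (rule continuous_on_eq[where f="\<lambda>x. of_real (weight x * (q j (x $ j) - odd_coeff j x) / 2)
      * (f (sigma j x) * cnj (g x) + f x * cnj (g (sigma j x)))"])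
    (auto simp: reflection_term_def intro!: continuous_intros continuous_on_Xprod_component
       continuous_on_q continuous_on_weight continuous_on_odd_coeff continuous_on_comp_sigma
       continuous_on_f continuous_on_g)

lemma reflection_term_outside_support: "x \<notin> support \<Longrightarrow> reflection_term x = 0"
  by (simp add: reflection_term_def f_outside_support g_outside_support)

lemma integral_reflection_term: "integral\<^sup>L lborel reflection_term = 0"
proof (rule integral_sigma_odd_eq_0[where j=j])
  show "reflection_term (sigma j x) = - reflection_term x" for x
    by (rule reflection_term_sigma)
  show "reflection_term \<in> borel_measurable borel"
    using continuous_on_UNIV_if_supported[OF continuous_on_reflection_term reflection_term_outside_support]
    by (rule borel_measurable_continuous_onI)
qed

lemma cnj_Dop:
  "cnj (Dop w p q j g x) = of_real (p j (x $ j)) * cnj (partial j g x)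
     + of_real (q j (x $ j)) * ((cnj (g x) + cnj (g (sigma j x))) / 2)
     + of_real (odd_coeff j x) * ((cnj (g x) - cnj (g (sigma j x))) / 2)"
  by (simp add: Dop_eq)

lemma weighted_integrand_eq:
  "(indicator (Xprod c) x * weight x) *\<^sub>R (Dop w p q j f x * cnj (g x))
     + (indicator (Xprod c) x * weight x) *\<^sub>R (f x * cnj (Dop w p q j g x))
   = flux_deriv x + reflection_term x"
proof (cases "x \<in> Xprod c")
  case True
  then show ?thesis
    unfolding Dop_eq cnj_Dop flux_deriv_def reflection_term_def
    by (simp add: scaleR_conv_of_real field_simps)
qed (simp add: flux_deriv_def reflection_term_def)

lemma integrable_weighted:
  fixes h :: "real ^ 'n \<Rightarrow> complex"
  assumes "continuous_on (Xprod c) h" "\<And>x. x \<notin> support \<Longrightarrow> h x = 0"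
  shows "integrable lborel (\<lambda>x. (indicator (Xprod c) x * weight x) *\<^sub>R h x)"
proof (rule integrable_if_supported)
  show "continuous_on (Xprod c) (\<lambda>x. (indicator (Xprod c) x * weight x) *\<^sub>R h x)"
    by (rule continuous_on_eq[where f="\<lambda>x. weight x *\<^sub>R h x"])
      (auto intro!: continuous_intros continuous_on_weight assms(1))
qed (simp add: assms(2))

theorem Dop_skew_symmetric: "inner_mu c w (Dop w p q j f) g = - inner_mu c w f (Dop w p q j g)"
proof -
  let ?V = "\<lambda>x. indicator (Xprod c) x * weight x"
  have Df_g: "continuous_on (Xprod c) (\<lambda>x. Dop w p q j f x * cnj (g x))"
    and f_Dg: "continuous_on (Xprod c) (\<lambda>x. f x * cnj (Dop w p q j g x))"
    by (intro continuous_intros continuous_on_Dop continuous_on_f continuous_on_g f_C1 g_C1)+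
  have Df_g_supp: "x \<notin> support \<Longrightarrow> Dop w p q j f x * cnj (g x) = 0"
    and f_Dg_supp: "x \<notin> support \<Longrightarrow> f x * cnj (Dop w p q j g x) = 0" for x
    by (simp_all add: f_outside_support g_outside_support)
  have "inner_mu c w (Dop w p q j f) g + inner_mu c w f (Dop w p q j g)
      = (\<integral>x. ?V x *\<^sub>R (Dop w p q j f x * cnj (g x)) + ?V x *\<^sub>R (f x * cnj (Dop w p q j g x)) \<partial>lborel)"
    using continuous_on_UNIV_if_supported[OF Df_g Df_g_supp] continuous_on_UNIV_if_supported[OF f_Dg f_Dg_supp]
      integrable_weighted[OF Df_g Df_g_supp] integrable_weighted[OF f_Dg f_Dg_supp]
    by (simp add: inner_mu_eq_integral borel_measurable_continuous_onI)
  also have "\<dots> = (\<integral>x. flux_deriv x + reflection_term x \<partial>lborel)"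
    by (simp add: weighted_integrand_eq)
  also have "\<dots> = 0"
    using integrable_if_supported[OF continuous_on_flux_deriv flux_deriv_outside_support]
      integrable_if_supported[OF continuous_on_reflection_term reflection_term_outside_support]
    by (simp add: integral_flux_deriv integral_reflection_term)
  finally show ?thesis
    by (simp add: eq_neg_iff_add_eq_0)
qed

end

theorem mainTheorem1:
  fixes c :: ereal
    and w p q :: "'n::finite \<Rightarrow> real \<Rightarrow> real"
    and j :: 'n
    and f g :: "real ^ 'n \<Rightarrow> complex"
  assumes c_pos: "0 < c"
    and w_C2: "\<And>i. C2_on (Xhalf c) (w i)"
    and w_pos: "\<And>i x. x \<in> Xhalf c \<Longrightarrow> 0 < w i x"
    and p_C2: "\<And>i. C2_on (Xhalf c) (p i)"
    and p_nz: "\<And>i x. x \<in> Xhalf c \<Longrightarrow> p i x \<noteq> 0"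
    and q_C1: "\<And>i. C1_on (Xhalf c) (q i)"
    and w_even: "\<And>i x. x \<in> Xhalf c \<Longrightarrow> w i (- x) = w i x"
    and p_even: "\<And>i x. x \<in> Xhalf c \<Longrightarrow> p i (- x) = p i x"
    and q_odd: "\<And>i x. x \<in> Xhalf c \<Longrightarrow> q i (- x) = - q i x"
    and f_C1c: "C1c (Xprod c) f"
    and g_C1c: "C1c (Xprod c) g"
  shows "inner_mu c w (Dop w p q j f) g = - inner_mu c w f (Dop w p q j g)"
proof -
  interpret dunkl_pair c w p q j f g
    using w_C2 p_C2 by unfold_locales (simp_all add: C2_on_def assms)
  show ?thesis
    by (rule Dop_skew_symmetric)
qed

end
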